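(* Let $\mathbb{X}$ be an $n$-dimensional real polyhedral Banach space and let $x,y_1,\dots,y_m\in \mathbb{X}$ with $1\le m<n$. Suppose $y_1,\dots,y_m$ are linearly independent and $x\notin \mathbb{Y}=\mathrm{span}\{y_1,\dots,y_m\}$. Let $\psi:\mathbb{X}\to \mathbb{X}^{**}$ denote the canonical isometric isomorphism. Suppose that every point of $\bigcap_{i=1}^m\mathcal{N}(\psi(y_i))\cap S_{\mathbb{X}^*}$ is a smooth point of $B_{\mathbb{X}^*}$. Then the best approximation to $x$ out of $\mathbb{Y}$ is unique.
   Context: A finite-dimensional real Banach space is polyhedral if its closed unit ball has finitely many extreme points. $B_{\mathbb{X}^*}$, $S_{\mathbb{X}^*}$ are the closed unit ball and unit sphere of $\mathbb{X}^*$. $\mathcal{N}(\psi(y))=\{x^*\in\mathbb{X}^*: x^*(y)=0\}$. A point $u\in S_{\mathbb{X}^*}$ is a smooth point of $B_{\mathbb{X}^*}$ if there is a unique $\phi\in\mathbb{X}^{**}$ with $\|\phi\|=1$ and $\phi(u)=1$. $y_0\in\mathbb{Y}$ is a best approximation to $x$ out of $\mathbb{Y}$ if $\|x-y_0\|=\inf_{y\in\mathbb{Y}}\|x-y\|$. *)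

theory Defs
  imports "HOL-Analysis.Analysis"
begin

definition finite_dim_space :: "'a::real_normed_vector itself \<Rightarrow> bool" where
  "finite_dim_space _ \<longleftrightarrow> (\<exists>B::'a set. finite B \<and> span B = UNIV)"

definition polyhedral :: "'a::real_normed_vector itself \<Rightarrow> bool" where
  "polyhedral _ \<longleftrightarrow> finite {x::'a. x extreme_point_of cball 0 1}"

text \<open>The dual space X* is modelled by bounded linear functionals (blinfun)
  with the operator norm; the bidual accordingly.
  Canonical embedding psi from X to X**.\<close>
definition canon_emb :: "'a::real_normed_vector \<Rightarrow> (('a \<Rightarrow>\<^sub>L real) \<Rightarrow>\<^sub>L real)" where
  "canon_emb y = Blinfun (\<lambda>f. blinfun_apply f y)"

definition ker_dual :: "(('a::real_normed_vector \<Rightarrow>\<^sub>L real) \<Rightarrow>\<^sub>L real) \<Rightarrow> ('a \<Rightarrow>\<^sub>L real) set" where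
  "ker_dual \<phi> = {u. blinfun_apply \<phi> u = 0}"

definition smooth_point_dual_ball :: "('a::real_normed_vector \<Rightarrow>\<^sub>L real) \<Rightarrow> bool" where
  "smooth_point_dual_ball u \<longleftrightarrow> norm u = 1 \<and>
     (\<exists>!\<phi> :: ('a \<Rightarrow>\<^sub>L real) \<Rightarrow>\<^sub>L real. norm \<phi> = 1 \<and> blinfun_apply \<phi> u = 1)"

definition best_approx :: "'a::real_normed_vector set \<Rightarrow> 'a \<Rightarrow> 'a \<Rightarrow> bool" where
  "best_approx Y x y0 \<longleftrightarrow> y0 \<in> Y \<and> norm (x - y0) = (INF y\<in>Y. norm (x - y))"

end

(* Existence: bounded parts of a finite-dimensional subspace are compact, so the distance to
   Y is attained.  Uniqueness: if y0 and y1 both lie at the minimal distance d > 0 from x, the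
   finite-dimensional Hahn-Banach theorem gives a norm-one functional f vanishing on Y with
   f (x - y0) = d, hence also f (x - y1) = d.  The unit vectors (x - y0)/d and (x - y1)/d are
   then both norming for f, so their images under psi are norm-one functionals on X* taking the
   value 1 at the point f of the dual sphere.  Smoothness of f makes these images equal, and psi
   is injective. *)
theory Submission
  imports Defs
begin

lemma infdist_subspace_scaled_le:
  fixes v s :: "'a::real_normed_vector"
  assumes "subspace S" "s \<in> S"
  shows "\<bar>t\<bar> * infdist v S \<le> norm (s + t *\<^sub>R v)"
proof (cases "t = 0")
  case False
  have "- (inverse t *\<^sub>R s) \<in> S"
    using assms subspace_neg subspace_scale by blast
  then have "\<bar>t\<bar> * infdist v S \<le> \<bar>t\<bar> * dist v (- (inverse t *\<^sub>R s))"
    by (simp add: infdist_le mult_left_mono)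
  also have "\<dots> = norm (t *\<^sub>R (v + inverse t *\<^sub>R s))"
    by (simp add: dist_norm)
  also have "\<dots> = norm (s + t *\<^sub>R v)"
    using False by (simp add: algebra_simps)
  finally show ?thesis .
qed simp

lemma closed_if_compact_Int_cball:
  fixes S :: "'a::real_normed_vector set"
  assumes "\<And>r. compact (S \<inter> cball 0 r)"
  shows "closed S"
proof -
  have "l \<in> S" if "l \<in> closure S" for l
  proof -
    define K where "K = S \<inter> cball 0 (norm l + 1)"
    have "norm z \<le> norm l + 1" if "z \<in> ball l 1" for z
      using that norm_triangle_ineq2[of z l] by (simp add: dist_norm norm_minus_commute)
    then have "ball l 1 \<inter> S \<subseteq> K"
      unfolding K_def by auto
    then have "ball l 1 \<inter> closure S \<subseteq> closure K"
      using open_Int_closure_subset[of "ball l 1" S] closure_mono by blast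
    also have "closure K = K"
      unfolding K_def by (simp add: assms compact_imp_closed)
    finally show ?thesis
      using that unfolding K_def by auto
  qed
  then show ?thesis
    using closure_subset_eq by blast
qed

lemma compact_span_Int_cball:
  fixes B :: "'a::real_normed_vector set"
  assumes "finite B"
  shows "compact (span B \<inter> cball 0 r)"
  using assms
proof (induction B arbitrary: r rule: finite_induct)
  case empty
  show ?case
    by (simp add: finite_imp_compact)
next
  case (insert v B)
  show ?case
  proof (cases "v \<in> span B")
    case True
    then show ?thesis
      using insert.IH by (simp add: span_redundant)
  next
    case False
    define \<delta> where "\<delta> = infdist v (span B)"
    have "closed (span B)"
      using insert.IH by (rule closed_if_compact_Int_cball)
    then have "\<delta> > 0"
      unfolding \<delta>_def using False span_zero by (blast intro: infdist_pos_not_in_closed)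
    \<comment> \<open>The coefficient of v in a point of the r-ball is at most r / \<delta> in modulus, so the
      ball lies in the image of a compact box under (s, t) \<mapsto> s + t v.\<close>
    define T where "T = r / \<delta>"
    define R where "R = r + T * norm v"
    define f where "f = (\<lambda>(s, t). s + t *\<^sub>R v)"
    define P where "P = (span B \<inter> cball 0 R) \<times> {-T..T}"
    have "span (insert v B) \<inter> cball 0 r \<subseteq> f ` P"
    proof
      fix w assume w: "w \<in> span (insert v B) \<inter> cball 0 r"
      then obtain t where s: "w - t *\<^sub>R v \<in> span B"
        unfolding span_insert by blast
      have "\<bar>t\<bar> * \<delta> \<le> norm (w - t *\<^sub>R v + t *\<^sub>R v)"
        unfolding \<delta>_def using s by (intro infdist_subspace_scaled_le) auto
      also have "\<dots> \<le> r"
        using w by simp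
      finally have t: "\<bar>t\<bar> \<le> T"
        unfolding T_def using \<open>\<delta> > 0\<close> by (simp add: field_simps)
      have "norm (w - t *\<^sub>R v) \<le> norm w + \<bar>t\<bar> * norm v"
        by (metis norm_scaleR norm_triangle_ineq4)
      also have "\<dots> \<le> R"
        unfolding R_def using w t by (intro add_mono mult_right_mono) auto
      finally have "(w - t *\<^sub>R v, t) \<in> P"
        unfolding P_def using s t by auto
      then show "w \<in> f ` P"
        unfolding f_def by (auto intro: image_eqI[where x = "(w - t *\<^sub>R v, t)"])
    qed
    moreover have "f ` P \<subseteq> span (insert v B)"
      unfolding f_def P_def
      using span_mono[of B "insert v B"] by (force intro: span_add span_scale span_base)
    ultimately have "span (insert v B) \<inter> cball 0 r = f ` P \<inter> cball 0 r"
      by blast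
    moreover have "compact (f ` P)"
      unfolding f_def P_def
      by (intro compact_continuous_image compact_Times insert.IH compact_Icc)
        (unfold case_prod_unfold, intro continuous_intros)
    ultimately show ?thesis
      by (simp add: compact_Int_closed)
  qed
qed

lemma best_approx_iff:
  "best_approx Y x z \<longleftrightarrow> z \<in> Y \<and> (\<forall>y\<in>Y. norm (x - z) \<le> norm (x - y))"
proof
  assume h: "best_approx Y x z"
  have "bdd_below ((\<lambda>y. norm (x - y)) ` Y)"
    by (rule bdd_belowI[of _ 0]) auto
  then show "z \<in> Y \<and> (\<forall>y\<in>Y. norm (x - z) \<le> norm (x - y))"
    using h unfolding best_approx_def by (auto intro: cINF_lower)
next
  assume "z \<in> Y \<and> (\<forall>y\<in>Y. norm (x - z) \<le> norm (x - y))"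
  then show "best_approx Y x z"
    unfolding best_approx_def by (auto intro: cInf_eq_minimum[symmetric])
qed

lemma best_approx_span_exists:
  fixes x :: "'a::real_normed_vector"
  assumes "finite S"
  shows "\<exists>z. best_approx (span S) x z"
proof -
  define K where "K = span S \<inter> cball 0 (2 * norm x)"
  have "0 \<in> K"
    unfolding K_def by (simp add: span_zero)
  moreover have "compact K"
    unfolding K_def using assms by (rule compact_span_Int_cball)
  moreover have "continuous_on K (\<lambda>y. norm (x - y))"
    by (intro continuous_intros)
  ultimately obtain z where z: "z \<in> K" and min: "\<And>y. y \<in> K \<Longrightarrow> norm (x - z) \<le> norm (x - y)"
    using continuous_attains_inf[of K "\<lambda>y. norm (x - y)"] by blast
  have "norm (x - z) \<le> norm (x - y)" if "y \<in> span S" for y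
  proof (cases "y \<in> K")
    case False
    then have "2 * norm x < norm y"
      using that unfolding K_def by simp
    then have "norm (x - 0) < norm (x - y)"
      using norm_triangle_ineq2[of y x] by (simp add: norm_minus_commute)
    then show ?thesis
      using min[OF \<open>0 \<in> K\<close>] by simp
  qed (use min in simp)
  then show ?thesis
    using z unfolding K_def best_approx_iff by blast
qed

lemma dominated_extension_value_if_bounds:
  fixes g :: "'a::real_normed_vector \<Rightarrow> real"
  assumes M: "subspace M" and g: "linear g" and dom: "\<And>m. m \<in> M \<Longrightarrow> g m \<le> norm m"
    and below: "\<And>m. m \<in> M \<Longrightarrow> g m - norm (m - v) \<le> c"
    and above: "\<And>m. m \<in> M \<Longrightarrow> c \<le> norm (m + v) - g m"
    and m: "m \<in> M"
  shows "g m + t * c \<le> norm (m + t *\<^sub>R v)"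
proof (cases "t = 0")
  case True
  then show ?thesis using dom m by simp
next
  case False
  define m' where "m' = inverse t *\<^sub>R m"
  have "m' \<in> M" "- m' \<in> M"
    unfolding m'_def using m M subspace_scale subspace_neg by blast+
  have "m = t *\<^sub>R m'"
    unfolding m'_def using False by simp
  then have eq: "g m + t * c = t * (g m' + c)" "norm (m + t *\<^sub>R v) = \<bar>t\<bar> * norm (m' + v)"
    using linear_scale[OF g] by (simp_all add: algebra_simps flip: scaleR_right_distrib)
  show ?thesis
  proof (cases "t > 0")
    case True
    then show ?thesis
      using eq above[OF \<open>m' \<in> M\<close>] by (simp add: mult_left_mono)
  next
    case False
    have "- (g m' + c) \<le> norm (m' + v)"
      using below[OF \<open>- m' \<in> M\<close>] linear_neg[OF g] by (simp add: norm_minus_commute add.commute)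
    then have "- t * - (g m' + c) \<le> - t * norm (m' + v)"
      using False by (intro mult_left_mono) auto
    then show ?thesis
      using eq False \<open>t \<noteq> 0\<close> by (simp add: algebra_simps abs_if)
  qed
qed

lemma exists_dominated_extension_value:
  fixes g :: "'a::real_normed_vector \<Rightarrow> real"
  assumes M: "subspace M" and g: "linear g" and dom: "\<And>m. m \<in> M \<Longrightarrow> g m \<le> norm m"
  shows "\<exists>c. \<forall>m\<in>M. \<forall>t. g m + t * c \<le> norm (m + t *\<^sub>R v)"
proof -
  have sep: "g m1 - norm (m1 - v) \<le> norm (m2 + v) - g m2" if "m1 \<in> M" "m2 \<in> M" for m1 m2
  proof -
    have "g m1 + g m2 \<le> norm (m1 + m2)"
      using dom[of "m1 + m2"] that M linear_add[OF g] by (simp add: subspace_add)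
    also have "\<dots> \<le> norm (m1 - v) + norm (m2 + v)"
      using norm_triangle_ineq[of "m1 - v" "m2 + v"] by simp
    finally show ?thesis by simp
  qed
  define c where "c = (SUP m\<in>M. g m - norm (m - v))"
  have "0 \<in> M"
    using M subspace_0 by blast
  have "g m - norm (m - v) \<le> c" if "m \<in> M" for m
    unfolding c_def using that sep[OF _ \<open>0 \<in> M\<close>] by (intro cSUP_upper bdd_aboveI2) auto
  moreover have "c \<le> norm (m + v) - g m" if "m \<in> M" for m
    unfolding c_def using that sep \<open>0 \<in> M\<close> by (intro cSUP_least) auto
  ultimately show ?thesis
    using dominated_extension_value_if_bounds[OF M g dom] by blast
qed

lemma dominated_linear_extension_insert:
  fixes g :: "'a::real_normed_vector \<Rightarrow> real"
  assumes M: "subspace M" and v: "v \<notin> M" and g: "linear g"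
    and dom: "\<And>m t. m \<in> M \<Longrightarrow> g m + t * c \<le> norm (m + t *\<^sub>R v)"
  shows "\<exists>h. linear h \<and> (\<forall>m\<in>M. h m = g m) \<and> h v = c \<and> (\<forall>w\<in>span (insert v M). h w \<le> norm w)"
proof -
  obtain B where B: "B \<subseteq> M" "independent B" "M \<subseteq> span B"
    by (meson basis_exists)
  have span_M: "span M = M"
    using M by (simp add: span_eq_iff)
  then have "span B = M"
    using B span_mono[OF B(1)] by blast
  then have "independent (insert v B)"
    using v B(2) by (intro independent_insertI) simp_all
  then obtain h where h: "linear h" "\<And>b. b \<in> insert v B \<Longrightarrow> h b = (if b = v then c else g b)"
    using linear_independent_extend[of "insert v B" "\<lambda>b. if b = v then c else g b"] by blast
  have "v \<notin> B"
    using v B(1) by blast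
  then have hM: "h m = g m" if "m \<in> M" for m
    using linear_eq_on_span[OF h(1) g, of B m] h(2) that \<open>span B = M\<close> \<open>v \<notin> B\<close> by (metis insertCI)
  have "h w \<le> norm w" if w: "w \<in> span (insert v M)" for w
  proof -
    obtain t where m: "w - t *\<^sub>R v \<in> M"
      using w unfolding span_insert span_M by blast
    have "h w = h (w - t *\<^sub>R v) + t * h v"
      using linear_diff[OF h(1)] linear_scale[OF h(1)] by simp
    also have "\<dots> = g (w - t *\<^sub>R v) + t * c"
      using hM[OF m] h(2) by simp
    also have "\<dots> \<le> norm w"
      using dom[OF m, of t] by simp
    finally show ?thesis .
  qed
  then show ?thesis
    using h(1) h(2)[of v] hM by (intro exI[of _ h]) simp
qed

lemma dominated_linear_extension:
  fixes g :: "'a::real_normed_vector \<Rightarrow> real"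
  assumes fd: "finite_dim_space TYPE('a)" and M: "subspace M" and g: "linear g"
    and dom: "\<And>m. m \<in> M \<Longrightarrow> g m \<le> norm m"
  shows "\<exists>h. linear h \<and> (\<forall>m\<in>M. h m = g m) \<and> (\<forall>w. h w \<le> norm w)"
proof -
  have "\<exists>h. linear h \<and> (\<forall>m\<in>M. h m = g m) \<and> (\<forall>w\<in>span (M \<union> B). h w \<le> norm w)"
    if "finite B" for B
    using that
  proof (induction B rule: finite_induct)
    case empty
    have "span M = M"
      using M by (simp add: span_eq_iff)
    show ?case
      using g dom by (intro exI[of _ g]) (simp add: \<open>span M = M\<close>)
  next
    case (insert b B)
    then obtain h where h: "linear h" "\<forall>m\<in>M. h m = g m" "\<forall>w\<in>span (M \<union> B). h w \<le> norm w"
      by blast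
    have span_eq: "span (M \<union> insert b B) = span (insert b (span (M \<union> B)))"
      by (simp only: Un_insert_right span_insert span_span)
    show ?case
    proof (cases "b \<in> span (M \<union> B)")
      case True
      then have "span (M \<union> insert b B) = span (M \<union> B)"
        unfolding span_eq using span_redundant[of b "span (M \<union> B)"] by (simp only: span_span)
      then show ?thesis
        using h by (intro exI[of _ h]) simp
    next
      case False
      obtain c where "\<forall>m\<in>span (M \<union> B). \<forall>t. h m + t * c \<le> norm (m + t *\<^sub>R b)"
        using exists_dominated_extension_value[OF subspace_span h(1)] h(3) by blast
      then obtain h' where h': "linear h'" "\<forall>m\<in>span (M \<union> B). h' m = h m"
          "\<forall>w\<in>span (insert b (span (M \<union> B))). h' w \<le> norm w"
        using dominated_linear_extension_insert[OF subspace_span False h(1)] by blast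
      have "\<forall>m\<in>M. h' m = g m"
        using h'(2) h(2) span_superset[of "M \<union> B"] by force
      then show ?thesis
        using h'(1,3) unfolding span_eq by blast
    qed
  qed
  moreover obtain B :: "'a set" where "finite B" "span B = UNIV"
    using fd unfolding finite_dim_space_def by blast
  moreover have "span (M \<union> B) = UNIV"
    using \<open>span B = UNIV\<close> span_mono[of B "M \<union> B"] by blast
  ultimately show ?thesis
    by (metis UNIV_I)
qed

lemma exists_annihilating_norming_functional:
  fixes v :: "'a::real_normed_vector"
  assumes fd: "finite_dim_space TYPE('a)" and Y: "subspace Y"
    and closest: "\<And>y. y \<in> Y \<Longrightarrow> norm v \<le> norm (v + y)"
  shows "\<exists>f::'a \<Rightarrow>\<^sub>L real. norm f \<le> 1 \<and> (\<forall>y\<in>Y. blinfun_apply f y = 0) \<and> blinfun_apply f v = norm v"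
proof (cases "v \<in> Y")
  case True
  then have "v = 0"
    using closest[of "- v"] Y subspace_neg by fastforce
  then show ?thesis
    by (intro exI[of _ 0]) simp
next
  case False
  have "0 + t * norm v \<le> norm (y + t *\<^sub>R v)" if y: "y \<in> Y" for y t
  proof (cases "t = 0")
    case False
    have "inverse t *\<^sub>R y \<in> Y"
      using y Y subspace_scale by blast
    have "0 + t * norm v \<le> \<bar>t\<bar> * norm v"
      by (simp add: mult_right_mono)
    also have "\<dots> \<le> \<bar>t\<bar> * norm (v + inverse t *\<^sub>R y)"
      using closest[OF \<open>inverse t *\<^sub>R y \<in> Y\<close>] by (simp add: mult_left_mono)
    also have "\<dots> = norm (y + t *\<^sub>R v)"
      using False by (simp add: algebra_simps flip: norm_scaleR)
    finally show ?thesis .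
  qed simp
  then obtain h0 where h0: "linear h0" "\<forall>y\<in>Y. h0 y = 0" "h0 v = norm v"
      "\<forall>w\<in>span (insert v Y). h0 w \<le> norm w"
    using dominated_linear_extension_insert[OF Y False linear_zero] by blast
  obtain h where h: "linear h" "\<forall>w\<in>span (insert v Y). h w = h0 w" "\<forall>w. h w \<le> norm w"
    using dominated_linear_extension[OF fd subspace_span h0(1) h0(4)[rule_format]] by blast
  have bound: "\<bar>h w\<bar> \<le> norm w" for w
    using h(3) h(3)[rule_format, of "- w"] linear_neg[OF h(1)] by (simp add: abs_le_iff)
  have "bounded_linear h"
    using linear_add[OF h(1)] linear_scale[OF h(1)] bound
    by (intro bounded_linear_intro[where K = 1]) simp_all
  define f where "f = Blinfun h"
  have f_apply: "blinfun_apply f = h"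
    unfolding f_def using \<open>bounded_linear h\<close> by (rule bounded_linear_Blinfun_apply)
  have "norm f \<le> 1"
    by (rule norm_blinfun_bound) (simp_all add: f_apply bound)
  moreover have "\<forall>y\<in>Y. blinfun_apply f y = 0"
    using h(2) h0(2) span_superset[of "insert v Y"] by (force simp: f_apply)
  moreover have "blinfun_apply f v = norm v"
    using h(2) h0(3) span_base[of v "insert v Y"] by (simp add: f_apply)
  ultimately show ?thesis
    by blast
qed

lemma canon_emb_apply [simp]: "blinfun_apply (canon_emb z) f = blinfun_apply f z"
  unfolding canon_emb_def
  by (subst bounded_linear_Blinfun_apply[OF bounded_bilinear.bounded_linear_left[OF bounded_bilinear_blinfun_apply]])
    simp

lemma norm_canon_emb_le: "norm (canon_emb z) \<le> norm z"
proof (rule norm_blinfun_bound)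
  show "norm (blinfun_apply (canon_emb z) f) \<le> norm z * norm f" for f
    using norm_blinfun[of f z] by (simp add: mult.commute)
qed simp

lemma inj_canon_emb:
  assumes "finite_dim_space TYPE('a::real_normed_vector)"
  shows "inj (canon_emb :: 'a \<Rightarrow> _)"
proof (rule injI)
  fix z0 z1 :: 'a
  assume "canon_emb z0 = canon_emb z1"
  then have eq: "blinfun_apply f z0 = blinfun_apply f z1" for f :: "'a \<Rightarrow>\<^sub>L real"
    by (metis canon_emb_apply)
  obtain f :: "'a \<Rightarrow>\<^sub>L real" where "blinfun_apply f (z0 - z1) = norm (z0 - z1)"
    using exists_annihilating_norming_functional[OF assms subspace_single_0, of "z0 - z1"] by auto
  then show "z0 = z1"
    using eq[of f] by (simp add: blinfun.diff_right)
qed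

lemma smooth_point_dual_ball_norming_unique:
  fixes u :: "'a::real_normed_vector \<Rightarrow>\<^sub>L real"
  assumes fd: "finite_dim_space TYPE('a)" and u: "smooth_point_dual_ball u"
    and z0: "norm z0 = 1" "blinfun_apply u z0 = 1" and z1: "norm z1 = 1" "blinfun_apply u z1 = 1"
  shows "z0 = z1"
proof -
  have norming: "norm (canon_emb z) = 1 \<and> blinfun_apply (canon_emb z) u = 1" if "norm z = 1" "blinfun_apply u z = 1" for z
  proof -
    have "1 \<le> norm (canon_emb z) * norm u"
      using norm_blinfun[of "canon_emb z" u] that by simp
    then show ?thesis
      using u norm_canon_emb_le[of z] that unfolding smooth_point_dual_ball_def by simp
  qed
  have "canon_emb z0 = canon_emb z1"
    using u norming[OF z0] norming[OF z1] unfolding smooth_point_dual_ball_def by blast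
  then show ?thesis
    using inj_canon_emb[OF fd] by (simp add: inj_eq)
qed

lemma best_approx_unique_of_smooth:
  fixes x :: "'a::real_normed_vector"
  assumes fd: "finite_dim_space TYPE('a)" and Y: "subspace Y" and x: "x \<notin> Y"
    and smooth: "\<And>u. norm u = 1 \<Longrightarrow> (\<forall>y\<in>Y. blinfun_apply u y = 0) \<Longrightarrow> smooth_point_dual_ball u"
    and y0: "best_approx Y x y0" and y1: "best_approx Y x y1"
  shows "y0 = y1"
proof -
  define d where "d = norm (x - y0)"
  have y0Y: "y0 \<in> Y" and y1Y: "y1 \<in> Y" and "norm (x - y1) = d"
    using y0 y1 unfolding best_approx_iff d_def by (auto intro: order.antisym)
  have "d > 0"
    using x y0Y unfolding d_def by auto
  have "norm (x - y0) \<le> norm (x - y0 + y)" if "y \<in> Y" for y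
  proof -
    have "norm (x - y0) \<le> norm (x - (y0 - y))"
      using y0 subspace_diff[OF Y y0Y that] unfolding best_approx_iff by blast
    also have "x - (y0 - y) = x - y0 + y"
      by simp
    finally show ?thesis .
  qed
  then obtain f :: "'a \<Rightarrow>\<^sub>L real" where f: "norm f \<le> 1" "\<forall>y\<in>Y. blinfun_apply f y = 0" "blinfun_apply f (x - y0) = d"
    using exists_annihilating_norming_functional[OF fd Y] unfolding d_def by blast
  have "blinfun_apply f (x - y1) = blinfun_apply f (x - y0) + blinfun_apply f (y0 - y1)"
    by (simp add: blinfun.diff_right)
  then have "blinfun_apply f (x - y1) = d"
    using f y0Y y1Y Y by (simp add: subspace_diff)
  have "d \<le> norm f * d"
    using norm_blinfun[of f "x - y0"] f(3) unfolding d_def by simp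
  then have "norm f = 1"
    using f(1) \<open>d > 0\<close> by simp
  then have "smooth_point_dual_ball f"
    using smooth f(2) by blast
  moreover have "norm (inverse d *\<^sub>R (x - y)) = 1" "blinfun_apply f (inverse d *\<^sub>R (x - y)) = 1"
    if "y = y0 \<or> y = y1" for y
    using that \<open>d > 0\<close> \<open>norm (x - y1) = d\<close> \<open>blinfun_apply f (x - y1) = d\<close> f(3)
    by (auto simp: d_def blinfun.scaleR_right)
  ultimately have "inverse d *\<^sub>R (x - y0) = inverse d *\<^sub>R (x - y1)"
    by (intro smooth_point_dual_ball_norming_unique[OF fd]) auto
  then show ?thesis
    using \<open>d > 0\<close> by simp
qed

theorem theorem5p7:
  fixes x :: "'a::banach" and y :: "nat \<Rightarrow> 'a" and n m :: nat
  assumes "finite_dim_space TYPE('a)"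
    and "dim (UNIV :: 'a set) = n"
    and "polyhedral TYPE('a)"
    and "1 \<le> m" and "m < n"
    and "inj_on y {1..m}" and "independent (y ` {1..m})"
    and "x \<notin> span (y ` {1..m})"
    and "\<forall>u \<in> (\<Inter>i\<in>{1..m}. ker_dual (canon_emb (y i))) \<inter> {u. norm u = 1}.
           smooth_point_dual_ball u"
  shows "\<exists>!y0. best_approx (span (y ` {1..m})) x y0"
proof -
  have smooth: "smooth_point_dual_ball u"
    if "norm u = 1" "\<forall>z\<in>span (y ` {1..m}). blinfun_apply u z = 0" for u
  proof -
    have "u \<in> ker_dual (canon_emb (y i))" if "i \<in> {1..m}" for i
      using \<open>i \<in> {1..m}\<close> \<open>\<forall>z\<in>span (y ` {1..m}). blinfun_apply u z = 0\<close>
      unfolding ker_dual_def by (simp add: span_base)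
    then show ?thesis
      using assms(9) \<open>norm u = 1\<close> by blast
  qed
  obtain y0 where "best_approx (span (y ` {1..m})) x y0"
    using best_approx_span_exists by blast
  then show ?thesis
    using best_approx_unique_of_smooth[OF assms(1) subspace_span assms(8) smooth] by blast
qed

end
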